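(* Let $L=10^6$, $\rho\le L^{-16}$, and let $\xi=(\xi_i)_{i\in\mathbb{Z}}$ be i.i.d. with $\mathbb{P}(\xi_i\ge n)=\rho^n$ for $n\in\{0,1,2,\dots\}$. With the labels $H_m$ defined below from $\xi$, let $p_k=\mathbb{P}[(k,0)\text{ is bad}]$. Then $p_k\le L^{-k/2}$ for every $k\ge0$.
   Context: Let $L_k=L^k$. For $k\ge0$ and $i\in\mathbb{Z}$ let $I_{(k,i)}=[iL_k,(i+1)L_k)\cap\mathbb{Z}$ and $M_k=\{k\}\times\mathbb{Z}$. For $m=(k+1,i)\in M_{k+1}$ let $\mathcal{Q}_m=\{(k,iL+j):0\le j\le L-1\}$. Define $H_m$ recursively: $H_{(0,i)}=\xi_i$; for $m\in M_{k+1}$, $H_m=0$ if every $m'\in\mathcal{Q}_m$ is good; $H_m=H_{m_1}-1$ if $m_1$ is the only bad element of $\mathcal{Q}_m$; $H_m=1+\sum_{i=1}^r H_{m_i}$ if $m_1,\dots,m_r$ with $r\ge2$ are the bad elements of $\mathcal{Q}_m$. Here $m$ is called good if $H_m=0$ and bad otherwise. *)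

theory Defs
  imports "HOL-Probability.Probability"
begin

text \<open>Labels H_m for m = (k,i), computed from a configuration xi :: int => nat,
  with block size L (so L_k = L^k). The children of (k+1,i) are (k, i*L + j), 0 <= j <= L-1.\<close>

primrec Hlab :: "nat \<Rightarrow> nat \<Rightarrow> int \<Rightarrow> (int \<Rightarrow> nat) \<Rightarrow> int" where
  "Hlab L 0 i xi = int (xi i)"
| "Hlab L (Suc k) i xi =
     (let B = {j \<in> {0..<int L}. Hlab L k (i * int L + j) xi \<noteq> 0} in
      if B = {} then 0
      else if card B = 1 then Hlab L k (i * int L + the_elem B) xi - 1
      else 1 + (\<Sum>j\<in>B. Hlab L k (i * int L + j) xi))"

definition bad :: "nat \<Rightarrow> nat \<Rightarrow> int \<Rightarrow> (int \<Rightarrow> nat) \<Rightarrow> bool" where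
  "bad L k i xi \<longleftrightarrow> Hlab L k i xi \<noteq> 0"

end

(*
  Take lam = L^3 and weigh a label h by w(h) = lam^h if h >= 1 and w(h) = 0 otherwise, so that
  w(H) >= 1 exactly at bad sites. If a single child is bad, H drops by one and the weight is divided
  by lam; if r >= 2 children are bad, w(H) = lam * (product of their weights). Hence
    w(H_(k+1,i)) <= (sum of the children's weights) / lam + lam * (sum over sets S of at least two
                    children of the product of their weights).
  Labels at one level are functions of disjoint blocks of xi, hence independent, so the bound
  e_k on E[w(H_(k,i))] satisfies e_(k+1) <= L e_k / lam + lam (L e_k)^2. The geometric tail of xi
  gives e_0 <= 2 lam rho <= L^-8, and then e_k <= L^-(k+8) by induction. Markov's inequality
  P(bad) <= E[w(H)] concludes, with much room to spare.
*)
theory Submission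
  imports Defs
begin

(* block L k i is the interval I_(k,i) on which H_(k,i) depends; children L i indexes Q_(k+1,i). *)
definition block :: "nat \<Rightarrow> nat \<Rightarrow> int \<Rightarrow> int set" where
  "block L k i = {i * int L ^ k ..< (i + 1) * int L ^ k}"

definition children :: "nat \<Rightarrow> int \<Rightarrow> int set" where
  "children L i = {i * int L ..< i * int L + int L}"

lemma finite_children [simp]: "finite (children L i)"
  by (simp add: children_def)

lemma card_children [simp]: "card (children L i) = L"
  by (simp add: children_def)

lemma finite_block [simp]: "finite (block L k i)"
  by (simp add: block_def)

lemma block_subset_block_Suc:
  assumes "a \<in> children L i"
  shows "block L k a \<subseteq> block L (Suc k) i"
proof -
  define j where "j = a - i * int L"
  have j: "a = i * int L + j" "0 \<le> j" "j + 1 \<le> int L"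
    using assms by (auto simp: children_def j_def)
  have "i * int L ^ Suc k \<le> a * int L ^ k"
    using j by (simp add: algebra_simps)
  moreover have "(a + 1) * int L ^ k \<le> (i + 1) * int L ^ Suc k"
    using j mult_right_mono[OF j(3), of "int L ^ k"] by (simp add: algebra_simps)
  ultimately show ?thesis
    by (auto simp: block_def)
qed

lemma disjoint_family_block:
  assumes "L > 0"
  shows "disjoint_family (block L k)"
proof -
  have "block L k a \<inter> block L k b = {}" if "a < b" for a b
  proof -
    have "(a + 1) * int L ^ k \<le> b * int L ^ k"
      using that assms by (intro mult_right_mono) auto
    then show ?thesis by (auto simp: block_def)
  qed
  then show ?thesis
    unfolding disjoint_family_on_def by (metis Int_commute linorder_neqE)
qed

lemma Hlab_Suc_children:
  "Hlab L (Suc k) i xi =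
     (let B = {a \<in> children L i. Hlab L k a xi \<noteq> 0} in
      if B = {} then 0
      else if card B = 1 then Hlab L k (the_elem B) xi - 1
      else 1 + (\<Sum>a\<in>B. Hlab L k a xi))"
proof -
  define B where "B = {j \<in> {0..<int L}. Hlab L k (i * int L + j) xi \<noteq> 0}"
  let ?shift = "(+) (i * int L)"
  have image: "{a \<in> children L i. Hlab L k a xi \<noteq> 0} = ?shift ` B"
  proof (intro set_eqI iffI)
    fix a assume "a \<in> {a \<in> children L i. Hlab L k a xi \<noteq> 0}"
    then have "a - i * int L \<in> B" by (auto simp: B_def children_def)
    then show "a \<in> ?shift ` B" by (metis add_diff_cancel_left' add_diff_eq image_eqI)
  qed (auto simp: B_def children_def)
  have inj: "inj_on ?shift B"
    by simp
  have the_elem: "the_elem (?shift ` B) = i * int L + the_elem B" if "card B = 1"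
    using that by (auto simp: card_1_singleton_iff)
  have card: "card (?shift ` B) = card B"
    using card_image[OF inj] .
  have sum: "(\<Sum>a\<in>?shift ` B. Hlab L k a xi) = (\<Sum>j\<in>B. Hlab L k (i * int L + j) xi)"
    using sum.reindex[OF inj] by simp
  show ?thesis
    unfolding Hlab.simps Let_def B_def[symmetric] image card sum
    using the_elem by simp
qed

lemma Hlab_cong:
  assumes "\<And>x. x \<in> block L k i \<Longrightarrow> xi x = xi' x"
  shows "Hlab L k i xi = Hlab L k i xi'"
  using assms
proof (induction k arbitrary: i)
  case 0
  then show ?case by (simp add: block_def)
next
  case (Suc k)
  have same: "Hlab L k a xi = Hlab L k a xi'" if "a \<in> children L i" for a
    using Suc block_subset_block_Suc[OF that] by blast
  define B where "B = {a \<in> children L i. Hlab L k a xi \<noteq> 0}"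
  have B': "{a \<in> children L i. Hlab L k a xi' \<noteq> 0} = B"
    using same by (auto simp: B_def)
  have the_elem: "the_elem B \<in> children L i" if single: "card B = 1"
  proof -
    obtain a where "B = {a}"
      using single by (rule card_1_singletonE)
    then show ?thesis by (auto simp: B_def)
  qed
  have sum: "(\<Sum>a\<in>B. Hlab L k a xi) = (\<Sum>a\<in>B. Hlab L k a xi')"
    using same by (intro sum.cong) (auto simp: B_def)
  show ?case
    unfolding Hlab_Suc_children Let_def B_def[symmetric] B'
    using sum same[OF the_elem] by simp
qed

lemma Hlab_nonneg: "0 \<le> Hlab L k i xi"
proof (induction k arbitrary: i)
  case 0
  then show ?case by simp
next
  case (Suc k)
  define B where "B = {a \<in> children L i. Hlab L k a xi \<noteq> 0}"
  have "0 \<le> Hlab L k (the_elem B) xi - 1" if "card B = 1"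
  proof -
    obtain a where "B = {a}" using \<open>card B = 1\<close> by (rule card_1_singletonE)
    then show ?thesis using Suc.IH[of a] by (auto simp: B_def)
  qed
  moreover have "0 \<le> (\<Sum>a\<in>B. Hlab L k a xi)"
    using Suc.IH by (intro sum_nonneg) auto
  ultimately show ?case
    unfolding Hlab_Suc_children Let_def B_def[symmetric] by simp
qed

lemma measurable_finite_PiM_count_space:
  assumes "finite K"
  shows "f \<in> measurable (PiM K (\<lambda>_. count_space (UNIV :: 'b::countable set))) (count_space UNIV)"
  using assms by (simp add: count_space_PiM_finite)

context prob_space
begin

lemma measurable_Hlab:
  assumes "\<And>i. \<xi> i \<in> measurable M (count_space UNIV)"
  shows "(\<lambda>\<omega>. Hlab L k i (\<lambda>x. \<xi> x \<omega>)) \<in> measurable M (count_space UNIV)"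
proof -
  have "(\<lambda>\<omega>. Hlab L k i (\<lambda>x. \<xi> x \<omega>)) = Hlab L k i \<circ> (\<lambda>\<omega>. restrict (\<lambda>x. \<xi> x \<omega>) (block L k i))"
    by (auto intro!: Hlab_cong simp: fun_eq_iff)
  also have "\<dots> \<in> measurable M (count_space UNIV)"
    using assms
    by (intro measurable_comp[OF measurable_restrict measurable_finite_PiM_count_space]) simp_all
  finally show ?thesis .
qed

lemma indep_vars_Hlab:
  assumes "L > 0" "indep_vars (\<lambda>_. count_space UNIV) \<xi> UNIV"
  shows "indep_vars (\<lambda>_. count_space UNIV) (\<lambda>a \<omega>. Hlab L k a (\<lambda>x. \<xi> x \<omega>)) UNIV"
proof -
  have "indep_vars (\<lambda>a. PiM (block L k a) (\<lambda>_. count_space UNIV))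
      (\<lambda>a \<omega>. restrict (\<lambda>x. \<xi> x \<omega>) (block L k a)) UNIV"
    using assms disjoint_family_block by (intro indep_vars_restrict) auto
  then have "indep_vars (\<lambda>_. count_space UNIV)
      (\<lambda>a \<omega>. Hlab L k a (restrict (\<lambda>x. \<xi> x \<omega>) (block L k a))) UNIV"
    by (rule indep_vars_compose2) (simp add: measurable_finite_PiM_count_space)
  moreover have "(\<lambda>a \<omega>. Hlab L k a (restrict (\<lambda>x. \<xi> x \<omega>) (block L k a))) =
      (\<lambda>a \<omega>. Hlab L k a (\<lambda>x. \<xi> x \<omega>))"
    by (auto intro!: Hlab_cong simp: fun_eq_iff)
  ultimately show ?thesis by simp
qed

end

definition bad_weight :: "real \<Rightarrow> int \<Rightarrow> real" where
  "bad_weight lam h = (if 1 \<le> h then lam ^ nat h else 0)"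

lemma bad_weight_nonneg: "0 \<le> lam \<Longrightarrow> 0 \<le> bad_weight lam h"
  by (simp add: bad_weight_def)

lemma bad_weight_diff_one_le:
  assumes "1 \<le> lam" "1 \<le> h"
  shows "bad_weight lam (h - 1) \<le> bad_weight lam h / lam"
proof (cases "h = 1")
  case True
  then show ?thesis using assms by (simp add: bad_weight_def)
next
  case False
  then have "nat h = Suc (nat (h - 1))"
    using assms by simp
  then show ?thesis
    using assms False by (simp add: bad_weight_def)
qed

lemma bad_weight_one_plus_sum:
  assumes "finite B" "\<And>a. a \<in> B \<Longrightarrow> 1 \<le> h a"
  shows "bad_weight lam (1 + (\<Sum>a\<in>B. h a)) = lam * (\<Prod>a\<in>B. bad_weight lam (h a))"
proof -
  have h_nonneg: "0 \<le> h a" if "a \<in> B" for a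
    using assms(2)[OF that] by simp
  then have sum_eq: "(\<Sum>a\<in>B. h a) = int (\<Sum>a\<in>B. nat (h a))"
    by simp
  have "nat (1 + (\<Sum>a\<in>B. h a)) = Suc (\<Sum>a\<in>B. nat (h a))"
    unfolding sum_eq by (simp only: of_nat_Suc[symmetric] nat_int)
  moreover have "0 \<le> (\<Sum>a\<in>B. h a)"
    using h_nonneg by (rule sum_nonneg)
  ultimately show ?thesis
    using assms(2) by (simp add: bad_weight_def power_sum)
qed

lemma bad_weight_Hlab_Suc_le:
  assumes lam: "1 \<le> lam"
  shows "bad_weight lam (Hlab L (Suc k) i xi)
    \<le> (\<Sum>a\<in>children L i. bad_weight lam (Hlab L k a xi)) / lam
      + lam * (\<Sum>S\<in>{S\<in>Pow (children L i). 2 \<le> card S}. \<Prod>a\<in>S. bad_weight lam (Hlab L k a xi))"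
    (is "_ \<le> ?single + ?multiple")
proof -
  define w where "w a = bad_weight lam (Hlab L k a xi)" for a
  define B where "B = {a \<in> children L i. Hlab L k a xi \<noteq> 0}"
  have w_nonneg: "0 \<le> w a" for a
    using lam by (simp add: w_def bad_weight_nonneg)
  have single_nonneg: "0 \<le> ?single" and multiple_nonneg: "0 \<le> ?multiple"
    using lam by (auto intro!: divide_nonneg_pos mult_nonneg_nonneg sum_nonneg prod_nonneg bad_weight_nonneg)
  have bad_pos: "1 \<le> Hlab L k a xi" if "a \<in> B" for a
    using that Hlab_nonneg[of L k a xi] by (simp add: B_def)
  have "finite B"
    by (simp add: B_def)
  consider "B = {}" | a where "B = {a}" | "2 \<le> card B"
    by (metis One_nat_def \<open>finite B\<close> card_1_singletonE card_0_eq less_2_cases not_le)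
  then show ?thesis
  proof cases
    case 1
    then have "Hlab L (Suc k) i xi = 0"
      unfolding Hlab_Suc_children Let_def B_def[symmetric] by simp
    then show ?thesis
      using single_nonneg multiple_nonneg by (simp add: bad_weight_def)
  next
    case (2 a)
    then have "a \<in> B"
      by simp
    then have "a \<in> children L i"
      by (simp add: B_def)
    have "bad_weight lam (Hlab L (Suc k) i xi) = bad_weight lam (Hlab L k a xi - 1)"
      using 2 unfolding Hlab_Suc_children Let_def B_def[symmetric] by simp
    also have "\<dots> \<le> w a / lam"
      unfolding w_def using lam bad_pos 2 by (intro bad_weight_diff_one_le) auto
    also have "\<dots> \<le> ?single"
      unfolding w_def[symmetric] using lam w_nonneg \<open>a \<in> children L i\<close>
      by (intro divide_right_mono member_le_sum) auto
    finally show ?thesis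
      using multiple_nonneg by linarith
  next
    case 3
    have "bad_weight lam (Hlab L (Suc k) i xi) = bad_weight lam (1 + (\<Sum>a\<in>B. Hlab L k a xi))"
      using 3 unfolding Hlab_Suc_children Let_def B_def[symmetric] by auto
    also have "\<dots> = lam * (\<Prod>a\<in>B. w a)"
      unfolding w_def using \<open>finite B\<close> bad_pos by (rule bad_weight_one_plus_sum)
    also have "\<dots> \<le> ?multiple"
      unfolding w_def[symmetric] using lam w_nonneg 3
      by (intro mult_left_mono member_le_sum prod_nonneg) (auto simp: B_def)
    finally show ?thesis
      using single_nonneg by linarith
  qed
qed

lemma sum_power_card_subsets_ge2:
  fixes e :: real
  assumes "finite C"
  shows "(\<Sum>S\<in>{S\<in>Pow C. 2 \<le> card S}. e ^ card S) = (1 + e) ^ card C - 1 - real (card C) * e"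
proof -
  have small: "{S\<in>Pow C. card S < 2} = insert {} ((\<lambda>a. {a}) ` C)"
  proof (intro set_eqI iffI)
    fix S assume "S \<in> {S\<in>Pow C. card S < 2}"
    moreover from this have "finite S"
      using assms finite_subset by blast
    ultimately show "S \<in> insert {} ((\<lambda>a. {a}) ` C)"
      by (auto simp: less_2_cases_iff card_1_singleton_iff)
  qed auto
  have "(\<Sum>S\<in>{S\<in>Pow C. card S < 2}. e ^ card S) = 1 + real (card C) * e"
    unfolding small using assms by (subst sum.insert) (auto simp: sum.reindex inj_on_def)
  moreover have "(1 + e) ^ card C = (\<Sum>S\<in>Pow C. e ^ card S)"
    using prod_add[OF assms, of "\<lambda>_. e" "\<lambda>_. 1"] by (simp add: add.commute)
  moreover have "(\<Sum>S\<in>Pow C. e ^ card S) =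
      (\<Sum>S\<in>{S\<in>Pow C. 2 \<le> card S}. e ^ card S) + (\<Sum>S\<in>{S\<in>Pow C. card S < 2}. e ^ card S)"
    using assms by (subst sum.union_disjoint[symmetric]) (auto intro: sum.cong)
  ultimately show ?thesis
    by simp
qed

lemma one_plus_power_le_quadratic:
  fixes e :: real
  assumes "0 \<le> e" "real n * e \<le> 1"
  shows "(1 + e) ^ n \<le> 1 + real n * e + (real n * e)^2"
  using assms(2)
proof (induction n)
  case 0
  then show ?case by simp
next
  case (Suc n)
  have ne: "real n * e \<le> 1"
    using Suc.prems assms(1) by (simp add: algebra_simps)
  have "(1 + e) ^ Suc n \<le> (1 + real n * e + (real n * e)^2) * (1 + e)"
    using Suc.IH[OF ne] assms(1) by (simp add: mult_right_mono)
  also have "\<dots> \<le> 1 + real (Suc n) * e + (real (Suc n) * e)^2"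
  proof -
    have "(real n * e) * (real n * e * e) \<le> 1 * ((real n + 1) * e * e)"
      using ne assms(1) by (intro mult_mono) (auto simp: algebra_simps)
    then show ?thesis
      by (simp add: algebra_simps power2_eq_square)
  qed
  finally show ?case .
qed

lemma sum_power_card_subsets_ge2_le:
  fixes e :: real
  assumes "finite C" "0 \<le> e" "real (card C) * e \<le> 1"
  shows "(\<Sum>S\<in>{S\<in>Pow C. 2 \<le> card S}. e ^ card S) \<le> (real (card C) * e)^2"
  using sum_power_card_subsets_ge2[OF assms(1)] one_plus_power_le_quadratic[OF assms(2,3)]
  by simp

lemma (in prob_space) nn_integral_bad_weight_le_geometric:
  assumes X: "X \<in> measurable M (count_space UNIV)"
    and tail: "\<And>n. prob {\<omega> \<in> space M. n \<le> X \<omega>} \<le> \<rho> ^ n"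
    and lam: "1 \<le> lam" and "0 \<le> \<rho>" and q: "lam * \<rho> \<le> 1/2"
  shows "(\<integral>\<^sup>+\<omega>. ennreal (bad_weight lam (int (X \<omega>))) \<partial>M) \<le> ennreal (2 * (lam * \<rho>))"
proof -
  define q where "q = lam * \<rho>"
  have "0 \<le> q" "q \<le> 1/2"
    using lam \<open>0 \<le> \<rho>\<close> q by (simp_all add: q_def)
  define A where "A m = {\<omega> \<in> space M. Suc m \<le> X \<omega>}" for m
  have A: "A m \<in> sets M" for m
    unfolding A_def using X by measurable
  have pointwise: "ennreal (bad_weight lam (int (X \<omega>))) \<le> (\<Sum>m. ennreal (lam ^ Suc m) * indicator (A m) \<omega>)"
    if "\<omega> \<in> space M" for \<omega>
  proof (cases "X \<omega>")
    case 0
    then show ?thesis by (simp add: bad_weight_def)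
  next
    case (Suc m)
    then have "ennreal (bad_weight lam (int (X \<omega>))) = ennreal (lam ^ Suc m) * indicator (A m) \<omega>"
      using that by (simp add: bad_weight_def A_def nat_add_distrib)
    also have "\<dots> \<le> (\<Sum>j. ennreal (lam ^ Suc j) * indicator (A j) \<omega>)"
      using sum_le_suminf[OF summableI, of "{m}"] by simp
    finally show ?thesis .
  qed
  have "(\<integral>\<^sup>+\<omega>. ennreal (bad_weight lam (int (X \<omega>))) \<partial>M)
      \<le> (\<integral>\<^sup>+\<omega>. (\<Sum>m. ennreal (lam ^ Suc m) * indicator (A m) \<omega>) \<partial>M)"
    by (intro nn_integral_mono pointwise)
  also have "\<dots> = (\<Sum>m. ennreal (lam ^ Suc m) * emeasure M (A m))"
    using A by (simp add: nn_integral_suminf nn_integral_cmult_indicator)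
  also have "\<dots> \<le> (\<Sum>m. ennreal (q ^ Suc m))"
  proof (intro suminf_le summableI)
    fix m
    have "emeasure M (A m) \<le> ennreal (\<rho> ^ Suc m)"
      using tail[of "Suc m"] by (simp add: emeasure_eq_measure A_def ennreal_leI)
    then have "ennreal (lam ^ Suc m) * emeasure M (A m) \<le> ennreal (lam ^ Suc m) * ennreal (\<rho> ^ Suc m)"
      by (rule mult_left_mono) simp
    also have "\<dots> = ennreal (q ^ Suc m)"
      using lam \<open>0 \<le> \<rho>\<close> by (simp add: q_def power_mult_distrib flip: ennreal_mult)
    finally show "ennreal (lam ^ Suc m) * emeasure M (A m) \<le> ennreal (q ^ Suc m)" .
  qed
  also have "\<dots> = ennreal (q / (1 - q))"
  proof (rule suminf_ennreal_eq)
    show "0 \<le> q ^ Suc m" for m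
      using \<open>0 \<le> q\<close> by simp
    have "(\<lambda>m. q ^ m) sums (1 / (1 - q))"
      using \<open>0 \<le> q\<close> \<open>q \<le> 1/2\<close> by (intro geometric_sums) auto
    from sums_mult[OF this, of q] show "(\<lambda>m. q ^ Suc m) sums (q / (1 - q))"
      by simp
  qed
  also have "\<dots> \<le> ennreal (2 * q)"
    using \<open>0 \<le> q\<close> \<open>q \<le> 1/2\<close> by (intro ennreal_leI) (simp add: field_simps mult_left_le)
  finally show ?thesis
    by (simp add: q_def)
qed

lemma (in prob_space) nn_integral_bad_weight_Hlab_Suc_le_moments:
  fixes k :: nat
  assumes rv: "\<And>i. \<xi> i \<in> measurable M (count_space UNIV)"
    and indep: "indep_vars (\<lambda>_. count_space UNIV) \<xi> UNIV"
    and "L > 0" and lam: "1 \<le> lam"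
  defines "E a \<equiv> \<integral>\<^sup>+\<omega>. ennreal (bad_weight lam (Hlab L k a (\<lambda>x. \<xi> x \<omega>))) \<partial>M"
  shows "(\<integral>\<^sup>+\<omega>. ennreal (bad_weight lam (Hlab L (Suc k) i (\<lambda>x. \<xi> x \<omega>))) \<partial>M)
    \<le> ennreal (1 / lam) * (\<Sum>a\<in>children L i. E a)
      + ennreal lam * (\<Sum>S\<in>{S\<in>Pow (children L i). 2 \<le> card S}. \<Prod>a\<in>S. E a)"
proof -
  define C where "C = children L i"
  define P where "P = {S\<in>Pow C. 2 \<le> card S}"
  define Y where "Y a \<omega> = ennreal (bad_weight lam (Hlab L k a (\<lambda>x. \<xi> x \<omega>)))" for a \<omega>
  have Y_measurable: "Y a \<in> borel_measurable M" for a
    unfolding Y_def by (rule measurable_compose[OF measurable_Hlab[OF rv]]) simp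
  have Y_indep: "indep_vars (\<lambda>_. borel) Y UNIV"
    unfolding Y_def
    using indep_vars_compose2[OF indep_vars_Hlab[OF \<open>L > 0\<close> indep, of k],
        of "\<lambda>_ h. ennreal (bad_weight lam h)" "\<lambda>_. borel"]
    by simp
  have pointwise: "ennreal (bad_weight lam (Hlab L (Suc k) i (\<lambda>x. \<xi> x \<omega>)))
      \<le> ennreal (1 / lam) * (\<Sum>a\<in>C. Y a \<omega>) + ennreal lam * (\<Sum>S\<in>P. \<Prod>a\<in>S. Y a \<omega>)" for \<omega>
  proof -
    have "ennreal (bad_weight lam (Hlab L (Suc k) i (\<lambda>x. \<xi> x \<omega>)))
      \<le> ennreal ((\<Sum>a\<in>C. bad_weight lam (Hlab L k a (\<lambda>x. \<xi> x \<omega>))) / lam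
        + lam * (\<Sum>S\<in>P. \<Prod>a\<in>S. bad_weight lam (Hlab L k a (\<lambda>x. \<xi> x \<omega>))))"
      unfolding C_def P_def by (intro ennreal_leI bad_weight_Hlab_Suc_le lam)
    also have "\<dots> = ennreal (1 / lam) * (\<Sum>a\<in>C. Y a \<omega>) + ennreal lam * (\<Sum>S\<in>P. \<Prod>a\<in>S. Y a \<omega>)"
      unfolding Y_def using lam
      by (simp add: prod_ennreal ennreal_mult'[symmetric] ennreal_plus[symmetric] bad_weight_nonneg
          sum_nonneg prod_nonneg ennreal_mult[symmetric] field_simps)
    finally show ?thesis .
  qed
  have "(\<integral>\<^sup>+\<omega>. ennreal (bad_weight lam (Hlab L (Suc k) i (\<lambda>x. \<xi> x \<omega>))) \<partial>M)
      \<le> (\<integral>\<^sup>+\<omega>. ennreal (1 / lam) * (\<Sum>a\<in>C. Y a \<omega>) + ennreal lam * (\<Sum>S\<in>P. \<Prod>a\<in>S. Y a \<omega>) \<partial>M)"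
    by (intro nn_integral_mono pointwise)
  also have "\<dots> = ennreal (1 / lam) * (\<Sum>a\<in>C. \<integral>\<^sup>+\<omega>. Y a \<omega> \<partial>M)
      + ennreal lam * (\<Sum>S\<in>P. \<integral>\<^sup>+\<omega>. (\<Prod>a\<in>S. Y a \<omega>) \<partial>M)"
    using Y_measurable by (simp add: nn_integral_add nn_integral_cmult nn_integral_sum)
  also have "(\<Sum>S\<in>P. \<integral>\<^sup>+\<omega>. (\<Prod>a\<in>S. Y a \<omega>) \<partial>M) = (\<Sum>S\<in>P. \<Prod>a\<in>S. \<integral>\<^sup>+\<omega>. Y a \<omega> \<partial>M)"
  proof (rule sum.cong)
    fix S assume "S \<in> P"
    then have "finite S"
      by (auto simp: P_def C_def intro: finite_subset)
    then show "(\<integral>\<^sup>+\<omega>. (\<Prod>a\<in>S. Y a \<omega>) \<partial>M) = (\<Prod>a\<in>S. \<integral>\<^sup>+\<omega>. Y a \<omega> \<partial>M)"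
      by (intro indep_vars_nn_integral indep_vars_subset[OF Y_indep]) auto
  qed simp
  finally show ?thesis
    by (simp add: C_def P_def E_def Y_def)
qed

lemma (in prob_space) nn_integral_bad_weight_Hlab_Suc_le:
  assumes rv: "\<And>i. \<xi> i \<in> measurable M (count_space UNIV)"
    and indep: "indep_vars (\<lambda>_. count_space UNIV) \<xi> UNIV"
    and "L > 0" and lam: "1 \<le> lam" and e: "0 \<le> e" "real L * e \<le> 1"
    and level_k: "\<And>a. (\<integral>\<^sup>+\<omega>. ennreal (bad_weight lam (Hlab L k a (\<lambda>x. \<xi> x \<omega>))) \<partial>M) \<le> ennreal e"
  shows "(\<integral>\<^sup>+\<omega>. ennreal (bad_weight lam (Hlab L (Suc k) i (\<lambda>x. \<xi> x \<omega>))) \<partial>M)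
    \<le> ennreal (real L * e / lam + lam * (real L * e)^2)"
proof -
  define C where "C = children L i"
  define P where "P = {S\<in>Pow C. 2 \<le> card S}"
  have "(\<integral>\<^sup>+\<omega>. ennreal (bad_weight lam (Hlab L (Suc k) i (\<lambda>x. \<xi> x \<omega>))) \<partial>M)
      \<le> ennreal (1 / lam) * (\<Sum>a\<in>C. \<integral>\<^sup>+\<omega>. ennreal (bad_weight lam (Hlab L k a (\<lambda>x. \<xi> x \<omega>))) \<partial>M)
        + ennreal lam * (\<Sum>S\<in>P. \<Prod>a\<in>S. \<integral>\<^sup>+\<omega>. ennreal (bad_weight lam (Hlab L k a (\<lambda>x. \<xi> x \<omega>))) \<partial>M)"
    unfolding C_def P_def by (rule nn_integral_bad_weight_Hlab_Suc_le_moments[OF rv indep \<open>L > 0\<close> lam])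
  also have "\<dots> \<le> ennreal (1 / lam) * (\<Sum>a\<in>C. ennreal e) + ennreal lam * (\<Sum>S\<in>P. \<Prod>a\<in>S. ennreal e)"
    using level_k by (intro add_mono mult_left_mono sum_mono prod_mono_ennreal) auto
  also have "ennreal (1 / lam) * (\<Sum>a\<in>C. ennreal e) = ennreal (real L * e / lam)"
    using e lam by (simp add: C_def ennreal_mult[symmetric] ennreal_of_nat_eq_real_of_nat)
  also have "(\<Sum>S\<in>P. \<Prod>a\<in>S. ennreal e) = ennreal (\<Sum>S\<in>P. e ^ card S)"
    using e by (simp add: ennreal_power sum_nonneg)
  also have "ennreal (real L * e / lam) + ennreal lam * ennreal (\<Sum>S\<in>P. e ^ card S)
      = ennreal (real L * e / lam + lam * (\<Sum>S\<in>P. e ^ card S))"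
    using e lam by (simp add: ennreal_mult sum_nonneg ennreal_plus)
  also have "\<dots> \<le> ennreal (real L * e / lam + lam * (real L * e)^2)"
    using sum_power_card_subsets_ge2_le[of C e] e lam
    by (intro ennreal_leI add_left_mono mult_left_mono) (auto simp: C_def P_def)
  finally show ?thesis .
qed

(* Here 1/u plays the role of L, and u^(k+8) is the bound on the weight at level k. *)
lemma level_bound_Suc:
  fixes u :: real
  assumes u: "0 < u" "u \<le> 1/2"
  shows "(1/u) * u^(k+8) / (1/u)^3 + (1/u)^3 * ((1/u) * u^(k+8))^2 \<le> u^(k+9)"
proof -
  have "(1/u) * u^(k+8) / (1/u)^3 = u^(k+9) * u"
    using u by (simp add: field_simps flip: power_add power_Suc)
  moreover have "(1/u)^3 * ((1/u) * u^(k+8))^2 = u^(k+9) * u^(k+2)"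
    using u by (simp add: field_simps flip: power_add power_Suc power_mult)
  moreover have "u^(k+2) \<le> u"
    using u power_decreasing[of 1 "k+2" u] by simp
  then have "u + u^(k+2) \<le> 1"
    using u by linarith
  ultimately show ?thesis
    using u mult_left_mono[of "u + u^(k+2)" 1 "u^(k+9)"] by (simp add: distrib_left)
qed

lemma level_bound_0:
  fixes u \<rho> :: real
  assumes u: "0 < u" "u \<le> 1/2" and \<rho>: "0 \<le> \<rho>" "\<rho> \<le> u^16"
  shows "(1/u)^3 * \<rho> \<le> 1/2" "2 * ((1/u)^3 * \<rho>) \<le> u^8"
proof -
  have "(1/u)^3 * \<rho> \<le> (1/u)^3 * u^16"
    using \<rho> u by (intro mult_left_mono) auto
  also have "\<dots> = u^8 * u^5"
    using u by (simp add: field_simps flip: power_add)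
  also have "\<dots> \<le> u^8 * (1/2)^5"
    using u by (intro mult_left_mono power_mono) auto
  finally have "(1/u)^3 * \<rho> * 32 \<le> u^8"
    by (simp add: power_divide)
  moreover have "u^8 \<le> 1"
    using u by (intro power_le_one) auto
  moreover have "0 \<le> (1/u)^3 * \<rho>"
    using u \<rho> by simp
  ultimately show "(1/u)^3 * \<rho> \<le> 1/2" "2 * ((1/u)^3 * \<rho>) \<le> u^8"
    by linarith+
qed

context prob_space
begin

lemma nn_integral_bad_weight_Hlab_le:
  assumes rv: "\<And>i. \<xi> i \<in> measurable M (count_space UNIV)"
    and indep: "indep_vars (\<lambda>_. count_space UNIV) \<xi> UNIV"
    and tail: "\<And>i n. prob {\<omega> \<in> space M. n \<le> \<xi> i \<omega>} \<le> \<rho> ^ n"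
    and L: "2 \<le> L" and \<rho>: "0 \<le> \<rho>" "\<rho> \<le> (1 / real L)^16"
  shows "(\<integral>\<^sup>+\<omega>. ennreal (bad_weight (real L^3) (Hlab L k a (\<lambda>x. \<xi> x \<omega>))) \<partial>M)
    \<le> ennreal ((1 / real L)^(k+8))"
proof -
  define u where "u = 1 / real L"
  have u: "0 < u" "u \<le> 1/2" and L_eq: "real L = 1/u"
    using L by (auto simp: u_def field_simps)
  have lam: "1 \<le> real L^3"
    using L by simp
  have "\<rho> \<le> u^16"
    using \<rho>(2) by (simp add: u_def)
  then have \<rho>_small: "real L^3 * \<rho> \<le> 1/2" "2 * (real L^3 * \<rho>) \<le> u^8"
    using level_bound_0[OF u \<rho>(1)] unfolding L_eq by simp_all
  show ?thesis
    unfolding u_def[symmetric]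
  proof (induction k arbitrary: a)
    case 0
    have "(\<integral>\<^sup>+\<omega>. ennreal (bad_weight (real L^3) (Hlab L 0 a (\<lambda>x. \<xi> x \<omega>))) \<partial>M)
        \<le> ennreal (2 * (real L^3 * \<rho>))"
      using nn_integral_bad_weight_le_geometric[OF rv tail lam \<rho>(1) \<rho>_small(1)] by simp
    also have "\<dots> \<le> ennreal (u^8)"
      using \<rho>_small(2) by (rule ennreal_leI)
    finally show ?case
      by simp
  next
    case (Suc k)
    have "real L * u^(k+8) = u^(k+7)"
      unfolding L_eq using u by (simp add: field_simps flip: power_Suc)
    then have "real L * u^(k+8) \<le> 1"
      using u power_le_one[of u "k+7"] by simp
    then have "(\<integral>\<^sup>+\<omega>. ennreal (bad_weight (real L^3) (Hlab L (Suc k) a (\<lambda>x. \<xi> x \<omega>))) \<partial>M)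
        \<le> ennreal (real L * u^(k+8) / real L^3 + real L^3 * (real L * u^(k+8))^2)"
      using L lam u Suc.IH by (intro nn_integral_bad_weight_Hlab_Suc_le[OF rv indep]) auto
    also have "\<dots> \<le> ennreal (u^(k+9))"
      using level_bound_Suc[OF u, of k] by (intro ennreal_leI) (simp add: L_eq)
    finally show ?case
      by (simp add: add.commute)
  qed
qed

lemma emeasure_bad_le_nn_integral_bad_weight:
  assumes rv: "\<And>i. \<xi> i \<in> measurable M (count_space UNIV)" and lam: "1 \<le> lam"
  shows "emeasure M {\<omega> \<in> space M. bad L k i (\<lambda>x. \<xi> x \<omega>)}
    \<le> (\<integral>\<^sup>+\<omega>. ennreal (bad_weight lam (Hlab L k i (\<lambda>x. \<xi> x \<omega>))) \<partial>M)"
proof -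
  let ?A = "{\<omega> \<in> space M. bad L k i (\<lambda>x. \<xi> x \<omega>)}"
  have A: "?A \<in> sets M"
    unfolding bad_def using measurable_Hlab[OF rv] by measurable
  have "indicator ?A \<omega> \<le> ennreal (bad_weight lam (Hlab L k i (\<lambda>x. \<xi> x \<omega>)))" for \<omega>
    using Hlab_nonneg[of L k i "\<lambda>x. \<xi> x \<omega>"] lam
    by (auto simp: indicator_def bad_def bad_weight_def)
  then have "(\<integral>\<^sup>+\<omega>. indicator ?A \<omega> \<partial>M) \<le> (\<integral>\<^sup>+\<omega>. ennreal (bad_weight lam (Hlab L k i (\<lambda>x. \<xi> x \<omega>))) \<partial>M)"
    by (intro nn_integral_mono)
  then show ?thesis
    using A by simp
qed

end

theorem lemma3p1:
  fixes M :: "'a measure" and \<xi> :: "int \<Rightarrow> 'a \<Rightarrow> nat" and \<rho> :: real and L :: nat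
  assumes "prob_space M"
    and "L = 10^6"
    and "\<rho> \<le> real L powr (-16)"
    and "\<And>i. \<xi> i \<in> measurable M (count_space UNIV)"
    and "prob_space.indep_vars M (\<lambda>_. count_space UNIV) \<xi> UNIV"
    and "\<And>i n. measure M {\<omega> \<in> space M. \<xi> i \<omega> \<ge> n} = \<rho> ^ n"
  shows "\<forall>k. measure M {\<omega> \<in> space M. bad L k 0 (\<lambda>i. \<xi> i \<omega>)} \<le> real L powr (- real k / 2)"
proof
  fix k
  interpret prob_space M by fact
  have L: "2 \<le> L"
    using assms(2) by simp
  have powr_eq: "real L powr (- real n) = (1 / real L)^n" for n
    using L by (simp add: powr_minus_divide powr_realpow power_one_over)
  have "0 \<le> \<rho>"
    using assms(6)[of 1 0] measure_nonneg[of M "{\<omega> \<in> space M. 1 \<le> \<xi> 0 \<omega>}"] by simp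
  moreover have "\<rho> \<le> (1 / real L)^16"
    using assms(3) powr_eq[of 16] by simp
  ultimately have "(\<integral>\<^sup>+\<omega>. ennreal (bad_weight (real L^3) (Hlab L k 0 (\<lambda>i. \<xi> i \<omega>))) \<partial>M)
      \<le> ennreal ((1 / real L)^(k+8))"
    using L assms(6) by (intro nn_integral_bad_weight_Hlab_le[OF assms(4,5)]) auto
  with L have "emeasure M {\<omega> \<in> space M. bad L k 0 (\<lambda>i. \<xi> i \<omega>)} \<le> ennreal ((1 / real L)^(k+8))"
    using emeasure_bad_le_nn_integral_bad_weight[of \<xi> "real L^3" L k 0] assms(4)
    by (auto intro: order_trans)
  then have "measure M {\<omega> \<in> space M. bad L k 0 (\<lambda>i. \<xi> i \<omega>)} \<le> (1 / real L)^(k+8)"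
    by (simp add: emeasure_eq_measure)
  also have "\<dots> \<le> (1 / real L)^k"
    using L by (intro power_decreasing) auto
  also have "\<dots> = real L powr (- real k)"
    by (rule powr_eq[symmetric])
  also have "\<dots> \<le> real L powr (- real k / 2)"
    using L by (intro powr_mono) auto
  finally show "measure M {\<omega> \<in> space M. bad L k 0 (\<lambda>i. \<xi> i \<omega>)} \<le> real L powr (- real k / 2)" .
qed

end
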